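(* Let $M$ be a submonoid of $(\mathbb N_0,+)$. (a) $\mathfrak W_M$ is a bracket pattern category. (b) $\mathfrak W_{\mathbb N_0}=\emptyset$. If $M\neq\mathbb N_0$, then $\mathfrak W_M=\langle\!\langle\mathbb N_0\setminus M\rangle\!\rangle$ if $\mathbb N_0\setminus M$ is finite, and $\mathfrak W_M=\langle\!\langle\{0,\dots,v\}\setminus M\mid v\in\mathbb N,\ \{0,\dots,v\}\setminus M\neq\emptyset\rangle\!\rangle$ if $\mathbb N_0\setminus M$ is infinite. (c) $M=\mathbb N_0\setminus\bigcup_{w\in\mathfrak W_M}A(w)=\mathbb N_0\setminus\bigcup_{w\in\mathfrak W_M}w$.
   Context: $\mathbb N=\{1,2,\dots\}$, $\mathbb N_0=\mathbb N\cup\{0\}$. A bracket pattern is a non-empty finite subset $w\subseteq\mathbb N$; $\|w\|:=\max(w)$. For bracket patterns $w,w'$: superposition $w\cup w'$; for $j\in w$ the projection $\cap_j w:=\{i\in w\mid i\le j\}$; the dual $w^\dagger:=\{\|w\|-i\mid i\in\mathbb N_0,\ i<\|w\|,\ i\notin w\}$. A bracket pattern category is a (possibly empty) set of bracket patterns closed under superposition, duals and projections; $\langle\!\langle\mathfrak W\rangle\!\rangle$ denotes the smallest bracket pattern category containing a set $\mathfrak W$ of bracket patterns, and $\langle\!\langle w\rangle\!\rangle:=\langle\!\langle\{w\}\rangle\!\rangle$. The completion of a bracket pattern $w$ is $A(w):=\{j-i\mid j\in w,\ i\in\mathbb N_0,\ i\notin w,\ i<j\}$. A submonoid of $(\mathbb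 N_0,+)$ is a subset containing $0$ and closed under addition; for such $M$, $\mathfrak W_M:=\{w\mid w\text{ bracket pattern},\ A(w)\subseteq\mathbb N_0\setminus M\}$. *)

theory Defs
  imports Main
begin

definition bracket_pattern :: "nat set \<Rightarrow> bool" where
  "bracket_pattern w \<longleftrightarrow> finite w \<and> w \<noteq> {} \<and> 0 \<notin> w"

definition bp_norm :: "nat set \<Rightarrow> nat" where
  "bp_norm w = Max w"

definition bp_proj :: "nat \<Rightarrow> nat set \<Rightarrow> nat set" where
  "bp_proj j w = {i \<in> w. i \<le> j}"

definition bp_dual :: "nat set \<Rightarrow> nat set" where
  "bp_dual w = {bp_norm w - i | i. i < bp_norm w \<and> i \<notin> w}"

definition bp_category :: "nat set set \<Rightarrow> bool" where
  "bp_category C \<longleftrightarrow>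
     (\<forall>w\<in>C. bracket_pattern w) \<and>
     (\<forall>w\<in>C. \<forall>w'\<in>C. w \<union> w' \<in> C) \<and>
     (\<forall>w\<in>C. bp_dual w \<in> C) \<and>
     (\<forall>w\<in>C. \<forall>j\<in>w. bp_proj j w \<in> C)"

definition bp_gen :: "nat set set \<Rightarrow> nat set set" where
  "bp_gen S = \<Inter>{C. bp_category C \<and> S \<subseteq> C}"

definition completion :: "nat set \<Rightarrow> nat set" where
  "completion w = {j - i | j i. j \<in> w \<and> i \<notin> w \<and> i < j}"

definition submonoid_nat :: "nat set \<Rightarrow> bool" where
  "submonoid_nat M \<longleftrightarrow> 0 \<in> M \<and> (\<forall>a\<in>M. \<forall>b\<in>M. a + b \<in> M)"

definition W_of :: "nat set \<Rightarrow> nat set set" where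
  "W_of M = {w. bracket_pattern w \<and> completion w \<subseteq> UNIV - M}"

end

theory Submission
  imports Defs
begin

text \<open>Superposition, projection and duality can only shrink the completion, so \<open>W_of M\<close> is a
  category. Since \<open>0 \<in> M\<close>, each \<open>w \<in> W_of M\<close> avoids \<open>M\<close> and is closed under \<open>j \<mapsto> j - m\<close>
  for \<open>m \<in> M\<close>, \<open>m < j\<close> (otherwise \<open>m = j - (j - m)\<close> lies in its completion); hence \<open>w\<close> is the
  union of the duals \<open>{j - m | m. m \<in> M \<and> m < j}\<close> of the initial gap sets \<open>{0..j} - M\<close>,
  \<open>j \<in> w\<close>. These gap sets lie in \<open>W_of M\<close> because \<open>M\<close> is closed under addition, so they
  generate \<open>W_of M\<close>; when \<open>UNIV - M\<close> is finite they are its projections.\<close>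

lemma bp_norm_in:
  assumes "bracket_pattern w"
  shows "bp_norm w \<in> w"
  using assms unfolding bracket_pattern_def bp_norm_def by auto

lemma bp_norm_pos:
  assumes "bracket_pattern w"
  shows "bp_norm w > 0"
  using bp_norm_in[OF assms] assms unfolding bracket_pattern_def by (metis gr0I)

lemma bracket_pattern_Un:
  assumes "bracket_pattern w" "bracket_pattern w'"
  shows "bracket_pattern (w \<union> w')"
  using assms unfolding bracket_pattern_def by auto

lemma bracket_pattern_bp_proj:
  assumes "bracket_pattern w" "j \<in> w"
  shows "bracket_pattern (bp_proj j w)"
  using assms unfolding bracket_pattern_def bp_proj_def by auto

lemma bracket_pattern_bp_dual:
  assumes "bracket_pattern w"
  shows "bracket_pattern (bp_dual w)"
proof -
  have "0 \<notin> w" using assms by (simp add: bracket_pattern_def)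
  then have "bp_norm w \<in> bp_dual w"
    unfolding bp_dual_def using bp_norm_pos[OF assms] by force
  moreover have "bp_dual w \<subseteq> {..bp_norm w}" "0 \<notin> bp_dual w"
    unfolding bp_dual_def by auto
  ultimately show ?thesis
    unfolding bracket_pattern_def using finite_subset by blast
qed

lemma subset_completion:
  assumes "bracket_pattern w"
  shows "w \<subseteq> completion w"
proof
  fix j assume "j \<in> w"
  moreover have "0 \<notin> w" using assms by (simp add: bracket_pattern_def)
  ultimately have "0 < j" by (auto intro: gr0I)
  then show "j \<in> completion w"
    unfolding completion_def using \<open>j \<in> w\<close> \<open>0 \<notin> w\<close> by force
qed

lemma completion_Un: "completion (w \<union> w') \<subseteq> completion w \<union> completion w'"
  unfolding completion_def by blast

lemma completion_bp_proj: "completion (bp_proj j w) \<subseteq> completion w"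
  unfolding completion_def bp_proj_def by auto

text \<open>A difference \<open>(N - i) - i'\<close> in the dual, with \<open>N = bp_norm w\<close>, is the difference
  \<open>(N - i') - i\<close> in \<open>w\<close>.\<close>

lemma completion_bp_dual:
  assumes "bracket_pattern w"
  shows "completion (bp_dual w) \<subseteq> completion w"
proof
  let ?N = "bp_norm w"
  fix x assume "x \<in> completion (bp_dual w)"
  then obtain j' i' where x: "x = j' - i'" "j' \<in> bp_dual w" "i' \<notin> bp_dual w" "i' < j'"
    unfolding completion_def by blast
  then obtain i where i: "j' = ?N - i" "i < ?N" "i \<notin> w"
    unfolding bp_dual_def by blast
  have "?N - i' \<in> w"
  proof (cases "i' = 0")
    case True
    then show ?thesis using bp_norm_in[OF assms] by simp
  next
    case False
    have "i' < ?N" using x(4) i(1) by linarith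
    show ?thesis
    proof (rule ccontr)
      assume "?N - i' \<notin> w"
      with False \<open>i' < ?N\<close> have "?N - (?N - i') \<in> bp_dual w"
        unfolding bp_dual_def by (intro CollectI exI[of _ "?N - i'"]) simp
      with x(3) \<open>i' < ?N\<close> show False by simp
    qed
  qed
  moreover have "x = (?N - i') - i" "i < ?N - i'"
    using x(1,4) i(1,2) by auto
  ultimately show "x \<in> completion w"
    unfolding completion_def using i(3) by blast
qed

lemma bp_category_W_of: "bp_category (W_of M)"
  unfolding bp_category_def
proof (intro conjI ballI)
  fix w w' assume "w \<in> W_of M" "w' \<in> W_of M"
  then show "w \<union> w' \<in> W_of M"
    unfolding W_of_def using bracket_pattern_Un completion_Un[of w w'] by blast
next
  fix w assume w: "w \<in> W_of M"
  then show "bp_dual w \<in> W_of M"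
    unfolding W_of_def using bracket_pattern_bp_dual completion_bp_dual by blast
  fix j assume "j \<in> w"
  with w show "bp_proj j w \<in> W_of M"
    unfolding W_of_def using bracket_pattern_bp_proj completion_bp_proj by blast
qed (simp add: W_of_def)

lemma W_of_disjoint:
  assumes "w \<in> W_of M"
  shows "w \<inter> M = {}"
  using assms subset_completion unfolding W_of_def by blast

lemma W_of_UNIV: "W_of UNIV = {}"
  using W_of_disjoint unfolding W_of_def bracket_pattern_def by blast

lemma diff_in_W_of:
  assumes M: "submonoid_nat M"
    and down_closed: "\<And>i j. i < j \<Longrightarrow> j \<in> T \<Longrightarrow> i \<in> T"
    and "finite (T - M)" "T - M \<noteq> {}"
  shows "T - M \<in> W_of M"
proof -
  have "x \<notin> M" if "x \<in> completion (T - M)" for x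
  proof
    assume "x \<in> M"
    from that obtain j i where ji: "x = j - i" "j \<in> T - M" "i \<notin> T - M" "i < j"
      unfolding completion_def by blast
    with down_closed have "i \<in> M" by blast
    with \<open>x \<in> M\<close> M have "i + x \<in> M" unfolding submonoid_nat_def by blast
    moreover have "i + x = j" using ji(1,4) by simp
    ultimately show False using ji(2) by simp
  qed
  moreover have "0 \<notin> T - M" using M by (simp add: submonoid_nat_def)
  ultimately show ?thesis
    unfolding W_of_def bracket_pattern_def using assms(3,4) by blast
qed

lemma initial_gaps_in_W_of:
  assumes "submonoid_nat M" "j \<notin> M"
  shows "{0..j} - M \<in> W_of M"
  using assms(2) by (intro diff_in_W_of[OF assms(1)]) auto

lemma bp_dual_initial_gaps:
  assumes "j \<notin> M"
  shows "bp_dual ({0..j} - M) = {j - m | m. m \<in> M \<and> m < j}"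
proof -
  have "bp_norm ({0..j} - M) = j"
    unfolding bp_norm_def using assms by (intro Max_eqI) auto
  then show ?thesis unfolding bp_dual_def by auto
qed

lemma W_of_eq_Union_duals:
  assumes M: "submonoid_nat M" and w: "w \<in> W_of M"
  shows "w = (\<Union>j\<in>w. bp_dual ({0..j} - M))"
proof -
  have shift_closed: "j - m \<in> w" if "j \<in> w" "m \<in> M" "m < j" for j m
  proof (rule ccontr)
    assume "j - m \<notin> w"
    with that have "j - m < j" by (cases "m = 0") auto
    with \<open>j - m \<notin> w\<close> that(1) have "j - (j - m) \<in> completion w"
      unfolding completion_def by blast
    then show False using that w unfolding W_of_def by auto
  qed
  have "w = (\<Union>j\<in>w. {j - m | m. m \<in> M \<and> m < j})"
  proof
    have "j \<in> {j - m | m. m \<in> M \<and> m < j}" if "j \<in> w" for j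
    proof -
      have "0 \<notin> w" using w unfolding W_of_def bracket_pattern_def by simp
      with that have "0 < j" by (metis gr0I)
      moreover have "0 \<in> M" using M by (simp add: submonoid_nat_def)
      ultimately show ?thesis by force
    qed
    then show "w \<subseteq> (\<Union>j\<in>w. {j - m | m. m \<in> M \<and> m < j})" by blast
    show "(\<Union>j\<in>w. {j - m | m. m \<in> M \<and> m < j}) \<subseteq> w"
      using shift_closed by blast
  qed
  also have "\<dots> = (\<Union>j\<in>w. bp_dual ({0..j} - M))"
    using bp_dual_initial_gaps W_of_disjoint[OF w] by (intro SUP_cong) auto
  finally show ?thesis .
qed

lemma bp_category_Union:
  assumes C: "bp_category C" and "finite F" "F \<noteq> {}" "F \<subseteq> C"
  shows "\<Union>F \<in> C"
  using assms(2-4)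
proof (induction F rule: finite_ne_induct)
  case (singleton x)
  then show ?case by simp
next
  case (insert x F)
  then show ?case using C unfolding bp_category_def by auto
qed

lemma W_of_subset_bp_category:
  assumes M: "submonoid_nat M" and C: "bp_category C"
    and gaps: "\<And>j. j \<notin> M \<Longrightarrow> {0..j} - M \<in> C"
  shows "W_of M \<subseteq> C"
proof
  fix w assume w: "w \<in> W_of M"
  have "bp_dual ({0..j} - M) \<in> C" if "j \<in> w" for j
    using that gaps W_of_disjoint[OF w] C unfolding bp_category_def by blast
  moreover have "finite w" "w \<noteq> {}"
    using w unfolding W_of_def bracket_pattern_def by auto
  ultimately have "(\<Union>j\<in>w. bp_dual ({0..j} - M)) \<in> C"
    by (intro bp_category_Union[OF C]) auto
  then show "w \<in> C" using W_of_eq_Union_duals[OF M w] by simp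
qed

lemma W_of_eq_bp_gen:
  assumes M: "submonoid_nat M" and "S \<subseteq> W_of M"
    and gaps: "\<And>C j. bp_category C \<Longrightarrow> S \<subseteq> C \<Longrightarrow> j \<notin> M \<Longrightarrow> {0..j} - M \<in> C"
  shows "W_of M = bp_gen S"
proof
  show "bp_gen S \<subseteq> W_of M"
    unfolding bp_gen_def using bp_category_W_of assms(2) by blast
  show "W_of M \<subseteq> bp_gen S"
    unfolding bp_gen_def using W_of_subset_bp_category[OF M] gaps by blast
qed

lemma W_of_eq_bp_gen_cofinite:
  assumes M: "submonoid_nat M" and "M \<noteq> UNIV" "finite (UNIV - M)"
  shows "W_of M = bp_gen {UNIV - M}"
proof (rule W_of_eq_bp_gen[OF M])
  show "{UNIV - M} \<subseteq> W_of M"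
    using diff_in_W_of[OF M] assms(2,3) by auto
  fix C j assume "bp_category C" "{UNIV - M} \<subseteq> C" "j \<notin> M"
  then have "bp_proj j (UNIV - M) \<in> C" unfolding bp_category_def by blast
  moreover have "bp_proj j (UNIV - M) = {0..j} - M" unfolding bp_proj_def by auto
  ultimately show "{0..j} - M \<in> C" by simp
qed

lemma W_of_eq_bp_gen_initial_gaps:
  assumes M: "submonoid_nat M"
  shows "W_of M = bp_gen {{0..v} - M | v. v \<ge> 1 \<and> {0..v} - M \<noteq> {}}"
proof (rule W_of_eq_bp_gen[OF M])
  show "{{0..v} - M | v. v \<ge> 1 \<and> {0..v} - M \<noteq> {}} \<subseteq> W_of M"
    by (auto intro!: diff_in_W_of[OF M])
  fix C j assume "{{0..v} - M | v. v \<ge> 1 \<and> {0..v} - M \<noteq> {}} \<subseteq> C" "j \<notin> M"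
  moreover have "j \<ge> 1" using \<open>j \<notin> M\<close> M unfolding submonoid_nat_def by (cases j) auto
  moreover have "j \<in> {0..j} - M" using \<open>j \<notin> M\<close> by simp
  ultimately show "{0..j} - M \<in> C" by blast
qed

lemma Union_W_of:
  assumes "submonoid_nat M"
  shows "(\<Union>w\<in>W_of M. w) = UNIV - M" "(\<Union>w\<in>W_of M. completion w) = UNIV - M"
proof -
  have cover: "UNIV - M \<subseteq> (\<Union>w\<in>W_of M. w)"
  proof
    fix n assume "n \<in> UNIV - M"
    then show "n \<in> (\<Union>w\<in>W_of M. w)"
      by (intro UN_I[OF initial_gaps_in_W_of[OF assms]]) auto
  qed
  have mono: "(\<Union>w\<in>W_of M. w) \<subseteq> (\<Union>w\<in>W_of M. completion w)"
    using subset_completion unfolding W_of_def by (intro UN_mono) auto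
  have bound: "(\<Union>w\<in>W_of M. completion w) \<subseteq> UNIV - M"
    unfolding W_of_def by (intro UN_least) simp
  show "(\<Union>w\<in>W_of M. w) = UNIV - M"
    by (rule subset_antisym[OF order_trans[OF mono bound] cover])
  show "(\<Union>w\<in>W_of M. completion w) = UNIV - M"
    by (rule subset_antisym[OF bound order_trans[OF cover mono]])
qed

theorem lemma7p16:
  fixes M :: "nat set"
  assumes "submonoid_nat M"
  shows "bp_category (W_of M)
    \<and> W_of UNIV = {}
    \<and> (M \<noteq> UNIV \<longrightarrow>
         (finite (UNIV - M) \<longrightarrow> W_of M = bp_gen {UNIV - M})
       \<and> (infinite (UNIV - M) \<longrightarrow>
            W_of M = bp_gen {{0..v} - M | v. v \<ge> 1 \<and> {0..v} - M \<noteq> {}}))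
    \<and> M = UNIV - (\<Union>w\<in>W_of M. completion w)
    \<and> M = UNIV - (\<Union>w\<in>W_of M. w)"
proof (intro conjI impI)
  show "bp_category (W_of M)" by (rule bp_category_W_of)
  show "W_of UNIV = {}" by (rule W_of_UNIV)
  show "W_of M = bp_gen {UNIV - M}" if "M \<noteq> UNIV" "finite (UNIV - M)"
    using W_of_eq_bp_gen_cofinite[OF assms that] .
  show "W_of M = bp_gen {{0..v} - M | v. v \<ge> 1 \<and> {0..v} - M \<noteq> {}}"
    by (rule W_of_eq_bp_gen_initial_gaps[OF assms])
  show "M = UNIV - (\<Union>w\<in>W_of M. completion w)" "M = UNIV - (\<Union>w\<in>W_of M. w)"
    using Union_W_of[OF assms] by auto
qed

end
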